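(* For an integer $k\ge 1$ let $n_k=2^{2^k-1}$. Then $n_k$ is super-imperfect, i.e. $2\beta(\beta(n_k))=n_k$, if and only if $k\in\{1,2,3,4,5\}$.
   Context: $\beta$ is the multiplicative arithmetic function with $\beta(1)=1$ and $\beta(p^a)=p^a-p^{a-1}+p^{a-2}-\cdots+(-1)^a=\frac{p^{a+1}+(-1)^a}{p+1}$ for every prime power $p^a$ ($a\ge1$). A positive integer $n$ is called super-imperfect if $2\beta(\beta(n))=n$. *)

theory Defs
  imports "HOL-Computational_Algebra.Primes"
begin

definition beta_pp :: "nat \<Rightarrow> nat \<Rightarrow> int" where
  "beta_pp p a = (\<Sum>i\<le>a. (-1) ^ (a - i) * int p ^ i)"

definition beta :: "nat \<Rightarrow> nat" where
  "beta n = nat (\<Prod>p\<in>prime_factors n. beta_pp p (multiplicity p n))"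

definition super_imperfect :: "nat \<Rightarrow> bool" where
  "super_imperfect n \<longleftrightarrow> n > 0 \<and> 2 * beta (beta n) = n"

end

theory Submission imports Defs begin

(* Write n_k = 2^(2^k - 1) and F_i = 2^(2^i) + 1 for the i-th Fermat number.
   Since beta(2^a) = (2^(a+1) + (-1)^a)/3, for odd a = 2^k - 1 we get
   3 * beta(n_k) = 2^(2^k) - 1 = F_0 F_1 ... F_(k-1), and as F_0 = 3,
   beta(n_k) = F_1 ... F_(k-1).
   If these Fermat numbers are prime (true for k <= 5), beta is multiplicative on
   this product of distinct primes, so beta(beta(n_k)) = prod (F_i - 1) = 2^(2^k - 2)
   and n_k is super-imperfect.
   For k >= 6 the prime 641 (which divides F_5) divides 2^(2^k) - 1 exactly once,
   because 2^(2^(6+j)) = 1 + 641 * 553 * 2^j modulo 641^2.  Hence 641 divides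
   beta(n_k) exactly once and 640 divides beta(beta(n_k)); the factor 5 rules out
   2 * beta(beta(n_k)) being a power of two. *)

section \<open>The function beta\<close>

lemma beta_pp_Suc: "beta_pp p (Suc a) = int p * beta_pp p a + (-1) ^ Suc a"
proof -
  have "beta_pp p (Suc a) = (-1) ^ Suc a + (\<Sum>i\<le>a. (-1) ^ (Suc a - Suc i) * int p ^ Suc i)"
    unfolding beta_pp_def by (subst sum.atMost_Suc_shift) simp
  also have "(\<Sum>i\<le>a. (-1) ^ (Suc a - Suc i) * int p ^ Suc i) = int p * beta_pp p a"
    unfolding beta_pp_def sum_distrib_left by (intro sum.cong) (auto simp: algebra_simps)
  finally show ?thesis by simp
qed

lemma beta_pp_closed_form: "beta_pp p a * (int p + 1) = int p ^ Suc a + (-1) ^ a"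
proof (induction a)
  case 0
  then show ?case by (simp add: beta_pp_def)
next
  case (Suc a)
  have "beta_pp p (Suc a) * (int p + 1)
        = int p * (beta_pp p a * (int p + 1)) + (-1) ^ Suc a * (int p + 1)"
    by (simp add: beta_pp_Suc algebra_simps)
  also have "\<dots> = int p ^ Suc (Suc a) + (-1) ^ Suc a"
    using Suc.IH by (simp add: algebra_simps)
  finally show ?case .
qed

lemma beta_mult_prime:
  assumes p: "prime p" and not_dvd: "\<not> p dvd m" and m: "m > 0"
  shows "beta (p * m) = (p - 1) * beta m"
proof -
  have p_new: "p \<notin> prime_factors m"
    using not_dvd by auto
  have factors: "prime_factors (p * m) = insert p (prime_factors m)"
    using p m by (simp add: prime_factors_product prime_prime_factors)
  have mult_p: "multiplicity p (p * m) = 1"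
    using p m not_dvd multiplicity_times_same[where p = p and x = m] prime_gt_1_nat[OF p]
    by (simp add: not_dvd_imp_multiplicity_0)
  have mult_q: "multiplicity q (p * m) = multiplicity q m" if "q \<in> prime_factors m" for q
  proof -
    have "prime q" "q \<noteq> p"
      using that p_new by auto
    then have "\<not> q dvd p"
      using p primes_dvd_imp_eq by blast
    then show ?thesis
      using \<open>prime q\<close> by (simp add: multiplicity_prime_elem_times_other)
  qed
  have "beta_pp p 1 = int (p - 1)"
    using prime_gt_0_nat[OF p] by (simp add: beta_pp_def)
  then have "beta (p * m) = nat (int (p - 1) * (\<Prod>q\<in>prime_factors m. beta_pp q (multiplicity q m)))"
    unfolding beta_def factors using p_new mult_p mult_q by simp
  also have "\<dots> = (p - 1) * beta m"
    unfolding beta_def by (simp add: nat_mult_distrib)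
  finally show ?thesis .
qed

lemma beta_prod_primes:
  assumes "finite P" and "\<forall>p\<in>P. prime p"
  shows "beta (\<Prod>P) = (\<Prod>p\<in>P. p - 1)"
  using assms
proof (induction P rule: finite_induct)
  case empty
  then show ?case by (simp add: beta_def)
next
  case (insert p P)
  have "\<not> p dvd \<Prod>P"
  proof
    assume "p dvd \<Prod>P"
    then obtain q where "q \<in> P" "p dvd q"
      using insert by (auto simp: prime_dvd_prod_iff)
    then show False
      using insert primes_dvd_imp_eq by blast
  qed
  moreover have "\<Prod>P > 0"
    using insert by (simp add: prime_gt_0_nat prod_pos)
  ultimately show ?case
    using insert by (simp add: beta_mult_prime)
qed

lemma beta_two_power:
  assumes "odd a"
  shows "3 * beta (2 ^ a) = 2 ^ Suc a - 1"
proof -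
  have "a > 0"
    using assms by (cases a) auto
  then have "beta (2 ^ a) = nat (beta_pp 2 a)"
    by (simp add: beta_def prime_factorization_prime_power)
  moreover have "beta_pp 2 a * 3 = 2 ^ Suc a - 1"
    using beta_pp_closed_form[of 2 a] assms by simp
  moreover have "(2::int) ^ Suc a \<ge> 1"
    by (rule one_le_power) simp
  ultimately have "int (3 * beta (2 ^ a)) = int (2 ^ Suc a - 1)"
    by (simp add: of_nat_diff)
  then show ?thesis
    by (simp only: of_nat_eq_iff)
qed

section \<open>Fermat numbers\<close>

definition fermat :: "nat \<Rightarrow> nat" where
  "fermat i = 2 ^ 2 ^ i + 1"

lemma strict_mono_fermat: "strict_mono fermat"
  unfolding strict_mono_def fermat_def by simp

lemma fermat_product: "(\<Prod>i<k. fermat i) + 1 = 2 ^ 2 ^ k"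
proof (induction k)
  case 0
  then show ?case by simp
next
  case (Suc k)
  define P where "P = (\<Prod>i<k. fermat i)"
  have "(\<Prod>i<Suc k. fermat i) + 1 = P * (P + 2) + 1"
    using Suc.IH by (simp add: P_def fermat_def)
  also have "\<dots> = (P + 1) ^ 2"
    by (simp add: power2_eq_square algebra_simps)
  also have "\<dots> = 2 ^ 2 ^ Suc k"
    using Suc.IH by (simp add: P_def power_mult[symmetric] mult.commute)
  finally show ?case .
qed

lemma three_beta_n_k:
  assumes "k \<ge> 1"
  shows "3 * beta (2 ^ (2 ^ k - 1)) = 2 ^ 2 ^ k - 1"
proof -
  have "odd (2 ^ k - 1 :: nat)"
    using assms by simp
  moreover have "Suc (2 ^ k - 1) = 2 ^ k"
    by simp
  ultimately show ?thesis
    using beta_two_power by metis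
qed

lemma beta_n_k:
  assumes "k \<ge> 1"
  shows "beta (2 ^ (2 ^ k - 1)) = (\<Prod>i\<in>{1..<k}. fermat i)"
proof -
  have "3 * beta (2 ^ (2 ^ k - 1)) = (\<Prod>i<k. fermat i)"
    using three_beta_n_k[OF assms] fermat_product[of k] by simp
  also have "\<dots> = 3 * (\<Prod>i\<in>{1..<k}. fermat i)"
    using assms by (simp add: atLeast0LessThan[symmetric] prod.atLeast_Suc_lessThan fermat_def)
  finally show ?thesis
    by simp
qed

lemma fermat_minus_one_product: "(\<Prod>i<k. fermat i - 1) * 2 = 2 ^ 2 ^ k"
proof (induction k)
  case 0
  then show ?case by (simp add: fermat_def)
next
  case (Suc k)
  have "(\<Prod>i<Suc k. fermat i - 1) * 2 = (fermat k - 1) * ((\<Prod>i<k. fermat i - 1) * 2)"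
    by (simp add: algebra_simps)
  also have "\<dots> = 2 ^ 2 ^ k * 2 ^ 2 ^ k"
    using Suc.IH by (simp add: fermat_def)
  also have "\<dots> = 2 ^ 2 ^ Suc k"
    by (simp flip: power_add)
  finally show ?case .
qed

theorem super_imperfect_if_fermat_primes:
  assumes "k \<ge> 1" and primes: "\<forall>i\<in>{1..<k}. prime (fermat i)"
  shows "super_imperfect (2 ^ (2 ^ k - 1))"
proof -
  have inj: "inj_on fermat {1..<k}"
    using strict_mono_fermat by (simp add: strict_mono_imp_inj_on)
  have image_prod: "\<Prod>(fermat ` {1..<k}) = (\<Prod>i\<in>{1..<k}. fermat i)"
    using prod.reindex[OF inj, of id] by simp
  have "beta (beta (2 ^ (2 ^ k - 1))) = beta (\<Prod>(fermat ` {1..<k}))"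
    unfolding beta_n_k[OF assms(1)] image_prod ..
  also have "\<dots> = (\<Prod>i\<in>{1..<k}. fermat i - 1)"
    using primes prod.reindex[OF inj, of "\<lambda>p. p - 1"] by (simp add: beta_prod_primes)
  finally have "2 * beta (beta (2 ^ (2 ^ k - 1))) * 2 = (\<Prod>i<k. fermat i - 1) * 2"
    using assms(1)
    by (simp add: atLeast0LessThan[symmetric] prod.atLeast_Suc_lessThan fermat_def)
  also have "\<dots> = 2 ^ (2 ^ k - 1) * 2"
  proof -
    have "Suc (2 ^ k - 1) = 2 ^ k"
      by simp
    then show ?thesis
      using fermat_minus_one_product[of k] by (metis power_Suc2)
  qed
  finally show ?thesis
    unfolding super_imperfect_def by simp
qed

section \<open>Primality certificates by trial division\<close>

lemma prime_by_trial_division: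
  fixes n s :: nat
  assumes "1 < n" and "n < s * s" and no_divisor: "list_all (\<lambda>d. n mod d \<noteq> 0) [2..<s]"
  shows "prime n"
proof (rule ccontr)
  assume "\<not> prime n"
  then obtain a where a: "a dvd n" "a \<noteq> 1" "a \<noteq> n"
    using assms(1) prime_nat_iff by blast
  then obtain b where n_eq: "n = a * b"
    by (elim dvdE)
  have "0 < a * b"
    using n_eq assms(1) by linarith
  then have "a \<noteq> 0" "b \<noteq> 0"
    by simp_all
  moreover have "b \<noteq> 1"
    using n_eq a(3) by simp
  ultimately have "1 < a" "1 < b"
    using a(2) by simp_all
  define d where "d = min a b"
  have "d * d \<le> n"
    unfolding d_def n_eq by (intro mult_le_mono) simp_all
  have "d < s"
  proof (rule ccontr)
    assume "\<not> d < s"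
    then have "s * s \<le> d * d"
      by (intro mult_le_mono) simp_all
    then show False
      using \<open>d * d \<le> n\<close> assms(2) by linarith
  qed
  moreover have "2 \<le> d"
    using \<open>1 < a\<close> \<open>1 < b\<close> unfolding d_def by simp
  ultimately have "n mod d \<noteq> 0"
    using no_divisor by (simp add: list_all_iff)
  moreover have "d dvd n"
    unfolding d_def n_eq min_def by simp
  ultimately show False
    by simp
qed

lemma fermat_prime_small:
  assumes "i < 5"
  shows "prime (fermat i)"
proof -
  have "i = 0 \<or> i = 1 \<or> i = 2 \<or> i = 3 \<or> i = 4"
    using assms by linarith
  then have "fermat i \<in> {3, 5, 17, 257, 65537}"
    by (auto simp: fermat_def)
  moreover have "prime (3::nat)"
    by (rule prime_by_trial_division[where s = 2]) simp_all
  moreover have "prime (5::nat)"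
    by (rule prime_by_trial_division[where s = 3]) (simp_all add: upt_rec)
  moreover have "prime (17::nat)"
    by (rule prime_by_trial_division[where s = 5]) (simp_all add: upt_rec)
  moreover have "prime (257::nat)"
    by (rule prime_by_trial_division[where s = 17]) (simp_all add: upt_rec)
  moreover have "prime (65537::nat)"
    by (rule prime_by_trial_division[where s = 257]) (simp_all add: upt_rec)
  ultimately show ?thesis
    by (metis empty_iff insert_iff)
qed

section \<open>The obstruction for k \<ge> 6\<close>

text \<open>The prime 641 = 5 * 2^7 + 1 is Euler's factor of F_5.\<close>
lemma prime_641: "prime (641::nat)"
  by (rule prime_by_trial_division[where s = 26]) (simp_all add: upt_rec)

text \<open>Lifting the exponent: 2^64 = 1 + 641 * 553 (mod 641^2), and each squaring doubles
  the multiple of 641.\<close>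
lemma two_power_mod_641_squared:
  "(2::nat) ^ 2 ^ (6 + j) mod 641\<^sup>2 = (1 + 641 * (553 * 2 ^ j)) mod 641\<^sup>2"
proof (induction j)
  case 0
  then show ?case by simp
next
  case (Suc j)
  define c where "c = 553 * (2::nat) ^ j"
  have "(2::nat) ^ 2 ^ (6 + Suc j) = (2 ^ 2 ^ (6 + j))\<^sup>2"
    by (simp add: power_mult[symmetric] power_add mult.commute)
  then have "(2::nat) ^ 2 ^ (6 + Suc j) mod 641\<^sup>2 = (1 + 641 * c)\<^sup>2 mod 641\<^sup>2"
    using Suc.IH by (metis c_def power_mod)
  also have "(1 + 641 * c)\<^sup>2 = (1 + 641 * (2 * c)) + 641\<^sup>2 * c\<^sup>2"
    by (simp add: power2_eq_square algebra_simps)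
  also have "\<dots> mod 641\<^sup>2 = (1 + 641 * (2 * c)) mod 641\<^sup>2"
    by (rule mod_mult_self2)
  finally show ?case
    by (simp add: c_def mult.left_commute)
qed

lemma exact_641_power:
  assumes "k \<ge> 6"
  shows "641 dvd (2::nat) ^ 2 ^ k - 1" and "\<not> 641\<^sup>2 dvd (2::nat) ^ 2 ^ k - 1"
proof -
  obtain j where k: "k = 6 + j"
    using assms le_Suc_ex by blast
  define c where "c = 553 * (2::nat) ^ j"
  have congr: "(2::nat) ^ 2 ^ k mod 641\<^sup>2 = (1 + 641 * c) mod 641\<^sup>2"
    unfolding k c_def by (rule two_power_mod_641_squared)
  have dvd_square: "(641::nat) dvd 641\<^sup>2"
    by (simp add: power2_eq_square)
  have "(2::nat) ^ 2 ^ k mod 641 = (2 ^ 2 ^ k mod 641\<^sup>2) mod 641"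
    by (rule mod_mod_cancel[OF dvd_square, symmetric])
  also have "\<dots> = (1 + 641 * c) mod 641"
    unfolding congr by (rule mod_mod_cancel[OF dvd_square])
  also have "\<dots> = 1"
    by simp
  finally have "(2::nat) ^ 2 ^ k mod 641 = 1 mod 641"
    by simp
  then show "641 dvd (2::nat) ^ 2 ^ k - 1"
    using mod_eq_dvd_iff_nat[of 1 "(2::nat) ^ 2 ^ k" 641] by simp
  have "\<not> 641 dvd c"
  proof
    assume "641 dvd c"
    then have "641 dvd (553::nat) \<or> 641 dvd (2::nat) ^ j"
      using prime_641 prime_dvd_mult_iff c_def by blast
    moreover have "\<not> 641 dvd (2::nat) ^ j"
      using prime_dvd_power[OF prime_641, of 2 j] by auto
    ultimately show False
      by simp
  qed
  then have "\<not> 641\<^sup>2 dvd 641 * c"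
    by (simp add: power2_eq_square)
  then have "(1 + 641 * c) mod 641\<^sup>2 \<noteq> 1 mod 641\<^sup>2"
    using mod_eq_dvd_iff_nat[of 1 "1 + 641 * c" "641\<^sup>2"] by simp
  then show "\<not> 641\<^sup>2 dvd (2::nat) ^ 2 ^ k - 1"
    using congr mod_eq_dvd_iff_nat[of 1 "(2::nat) ^ 2 ^ k" "641\<^sup>2"] by simp
qed

text \<open>For k \<ge> 6, 641 divides beta(n_k) exactly once, so 640 divides beta(beta(n_k)),
  which is incompatible with 2 * beta(beta(n_k)) being a power of two.\<close>
theorem not_super_imperfect_large:
  assumes "k \<ge> 6"
  shows "\<not> super_imperfect (2 ^ (2 ^ k - 1))"
proof
  assume super: "super_imperfect (2 ^ (2 ^ k - 1))"
  define B where "B = beta (2 ^ (2 ^ k - 1))"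
  have three_B: "3 * B = 2 ^ 2 ^ k - 1"
    using three_beta_n_k assms B_def by simp
  have "641 dvd 3 * B"
    using exact_641_power(1)[OF assms] three_B by simp
  then have "641 dvd B"
    using prime_dvd_mult_iff[OF prime_641] by simp
  then obtain m where B: "B = 641 * m"
    by (elim dvdE)
  have "\<not> 641 dvd m"
  proof
    assume "641 dvd m"
    then have "641\<^sup>2 dvd B"
      unfolding B power2_eq_square by (rule mult_dvd_mono[OF dvd_refl])
    then have "641\<^sup>2 dvd 3 * B"
      by (rule dvd_mult)
    then show False
      using exact_641_power(2)[OF assms] three_B by metis
  qed
  moreover have "m > 0"
    using \<open>\<not> 641 dvd m\<close> by (intro gr0I) simp
  ultimately have "beta B = 5 * (128 * beta m)"
    unfolding B using beta_mult_prime[OF prime_641] by simp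
  then have "5 dvd 2 * beta B"
    by simp
  also have "2 * beta B = 2 ^ (2 ^ k - 1)"
    using super unfolding super_imperfect_def B_def by simp
  finally have "5 dvd (2::nat) ^ (2 ^ k - 1)" .
  moreover have "prime (5::nat)"
    using fermat_prime_small[of 1] by (simp add: fermat_def)
  ultimately show False
    using prime_dvd_power[of "5::nat" 2 "2 ^ k - 1"] by simp
qed

theorem mainTheorem1:
  fixes k :: nat
  assumes "k \<ge> 1"
  shows "super_imperfect (2 ^ (2 ^ k - 1)) \<longleftrightarrow> k \<in> {1, 2, 3, 4, 5}"
proof (cases "k \<ge> 6")
  case True
  then show ?thesis
    using not_super_imperfect_large by auto
next
  case False
  then have "\<forall>i\<in>{1..<k}. prime (fermat i)"
    using fermat_prime_small by simp
  then have "super_imperfect (2 ^ (2 ^ k - 1))"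
    using super_imperfect_if_fermat_primes assms by blast
  moreover have "k \<in> {1, 2, 3, 4, 5}"
    using False assms by auto
  ultimately show ?thesis
    by simp
qed

end
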